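(* Let $M\in\mathbb{R}^{n\times n}$ be real symmetric with spectral decomposition $M=\sum_{i=1}^n\lambda_iu_iu_i^T$, $\lambda_1>\cdots>\lambda_n$ distinct, $u_i$ orthonormal. Let $p\in(0,1)$, let $Q$ be the random symmetric matrix with independent entries $Q_{ij}$ ($i\le j$) equal to $1/p$ with probability $p$ and $0$ otherwise, and $E=M\circ Q-M$. Let $R=\sum_{j\ne1}\frac{1}{\lambda_j-\lambda_1}u_ju_j^T$ be the reduced resolvent of $M$ associated with $u_1$. Let $w_1=u_1\circ u_1$, $\mathcal{M}=M\circ M$, and let $M_k$ denote the $k$-th column of $M$. Then $$\mathbb{E}\big[\|REu_1\|_2^2\big]\le\frac{1}{(\lambda_2-\lambda_1)^2}\,\frac{1-p}{p}\Big(\sum_{k=1}^nu_1(k)^2\|M_k\|_2^2-\Big[2w_1^T\mathcal{M}w_1-\sum_{k=1}^nw_1(k)^2\mathcal{M}_{kk}\Big]\Big).$$ Moreover, if $\lambda_1=\|M\|_2$, then $$\mathbb{E}\big[\|REu_1\|_2^2\big]\le\frac{1}{(1-\lambda_2/\lambda_1)^2}\|u_1\|_\infty^2\frac{\mathrm{NumRank}(M)}{p},$$ where $\mathrm{NumRank}(M)=\|M\|_F^2/\|M\|_2^2$.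
   Context: $\circ$ is the Hadamard product, $\|\cdot\|_F$ the Frobenius norm, $\|\cdot\|_2$ the spectral (resp. Euclidean) norm, $\|x\|_\infty=\max_i|x_i|$. *)

theory Defs
  imports "HOL-Probability.Probability"
begin

text \<open>Conventions: n x n matrices are functions nat => nat => real, only entries with
indices < n are meaningful; vectors are nat => real, coordinates 0..n-1.
Index shift: the paper's u_1, lambda_1, lambda_2 are u 0, lam 0, lam 1.\<close>

definition frob_sq :: "nat \<Rightarrow> (nat \<Rightarrow> nat \<Rightarrow> real) \<Rightarrow> real" where
  "frob_sq n A = (\<Sum>i<n. \<Sum>j<n. (A i j)\<^sup>2)"

definition vec_norm :: "nat \<Rightarrow> (nat \<Rightarrow> real) \<Rightarrow> real" where
  "vec_norm n x = sqrt (\<Sum>i<n. (x i)\<^sup>2)"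

definition mat_vec :: "nat \<Rightarrow> (nat \<Rightarrow> nat \<Rightarrow> real) \<Rightarrow> (nat \<Rightarrow> real) \<Rightarrow> (nat \<Rightarrow> real)" where
  "mat_vec n A x = (\<lambda>i. \<Sum>j<n. A i j * x j)"

definition spec_norm :: "nat \<Rightarrow> (nat \<Rightarrow> nat \<Rightarrow> real) \<Rightarrow> real" where
  "spec_norm n A = Sup {vec_norm n (mat_vec n A x) | x. vec_norm n x = 1}"

definition inf_norm :: "nat \<Rightarrow> (nat \<Rightarrow> real) \<Rightarrow> real" where
  "inf_norm n x = Max {\<bar>x i\<bar> | i. i < n}"

definition num_rank :: "nat \<Rightarrow> (nat \<Rightarrow> nat \<Rightarrow> real) \<Rightarrow> real" where
  "num_rank n A = frob_sq n A / (spec_norm n A)\<^sup>2"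

definition coin_pmf :: "nat \<Rightarrow> real \<Rightarrow> (nat \<times> nat \<Rightarrow> bool) pmf" where
  "coin_pmf n p = Pi_pmf {(i, j). i \<le> j \<and> j < n} False (\<lambda>_. bernoulli_pmf p)"

definition Qmat :: "real \<Rightarrow> (nat \<times> nat \<Rightarrow> bool) \<Rightarrow> nat \<Rightarrow> nat \<Rightarrow> real" where
  "Qmat p b i j = (if b (min i j, max i j) then 1 / p else 0)"

definition Emat :: "(nat \<Rightarrow> nat \<Rightarrow> real) \<Rightarrow> real \<Rightarrow> (nat \<times> nat \<Rightarrow> bool) \<Rightarrow> nat \<Rightarrow> nat \<Rightarrow> real" where
  "Emat M p b i j = M i j * Qmat p b i j - M i j"

definition red_resolvent :: "nat \<Rightarrow> (nat \<Rightarrow> real) \<Rightarrow> (nat \<Rightarrow> nat \<Rightarrow> real) \<Rightarrow> nat \<Rightarrow> nat \<Rightarrow> real" where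
  "red_resolvent n lam u k l = (\<Sum>j\<in>{1..<n}. 1 / (lam j - lam 0) * u j k * u j l)"

end

theory Submission
  imports Defs
begin

text \<open>\<open>R\<close> annihilates \<open>u\<^sub>1\<close> and has norm \<open>1 / (\<lambda>\<^sub>1 - \<lambda>\<^sub>2)\<close> on its orthogonal
complement, so Bessel's inequality gives \<open>\<parallel>R v\<parallel>\<^sup>2 \<le> (\<parallel>v\<parallel>\<^sup>2 - (u\<^sub>1\<^sup>T v)\<^sup>2) / (\<lambda>\<^sub>2 - \<lambda>\<^sub>1)\<^sup>2\<close>
for every \<open>v\<close>. For \<open>v = E u\<^sub>1\<close> write \<open>E\<^sub>i\<^sub>k = M\<^sub>i\<^sub>k \<xi>\<^sub>i\<^sub>k\<close>, where the \<open>\<xi>\<close> are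
independent, centred, of variance \<open>(1 - p) / p\<close>, and indexed by unordered pairs \<open>{i, k}\<close>.
Expanding \<open>\<parallel>E u\<^sub>1\<parallel>\<^sup>2\<close> and \<open>(u\<^sub>1\<^sup>T E u\<^sub>1)\<^sup>2\<close>, only products of two noises of the same pair
have nonzero mean; this gives both second moments in closed form, hence the first bound.
For the second bound, the bracket is nonnegative, \<open>u\<^sub>1(k)\<^sup>2 \<le> \<parallel>u\<^sub>1\<parallel>\<^sub>\<infinity>\<^sup>2\<close>, and
\<open>|\<lambda>\<^sub>2| \<le> \<parallel>M\<parallel>\<^sub>2 = \<lambda>\<^sub>1\<close> makes \<open>\<lambda>\<^sub>1\<close> positive.\<close>

definition orthonormal_rows :: "nat \<Rightarrow> (nat \<Rightarrow> nat \<Rightarrow> real) \<Rightarrow> bool" where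
  "orthonormal_rows n u \<longleftrightarrow> (\<forall>i<n. \<forall>j<n. (\<Sum>k<n. u i k * u j k) = (if i = j then 1 else 0))"

lemma sum_sq_orthonormal_comb:
  assumes orth: "orthonormal_rows n u" and J: "J \<subseteq> {..<n}"
  shows "(\<Sum>k<n. (\<Sum>j\<in>J. a j * u j k)\<^sup>2) = (\<Sum>j\<in>J. (a j)\<^sup>2)"
proof -
  have fJ: "finite J" using J finite_subset by blast
  have "(\<Sum>k<n. (\<Sum>j\<in>J. a j * u j k)\<^sup>2) = (\<Sum>k<n. \<Sum>j\<in>J. \<Sum>j'\<in>J. a j * a j' * (u j k * u j' k))"
    by (simp add: power2_eq_square sum_product algebra_simps)
  also have "\<dots> = (\<Sum>j\<in>J. \<Sum>j'\<in>J. a j * a j' * (\<Sum>k<n. u j k * u j' k))"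
    by (simp only: sum_distrib_left) (subst sum.swap, rule sum.cong[OF refl], rule sum.swap)
  also have "\<dots> = (\<Sum>j\<in>J. \<Sum>j'\<in>J. a j * a j' * (if j = j' then 1 else 0))"
    using orth J unfolding orthonormal_rows_def by (intro sum.cong refl) (auto simp: subset_iff)
  also have "\<dots> = (\<Sum>j\<in>J. (a j)\<^sup>2)"
    by (simp add: fJ power2_eq_square if_distrib cong: if_cong)
  finally show ?thesis .
qed

lemma bessel_inequality:
  assumes orth: "orthonormal_rows n u"
  shows "(\<Sum>j<n. (\<Sum>k<n. u j k * v k)\<^sup>2) \<le> (\<Sum>k<n. (v k)\<^sup>2)"
proof -
  define c where "c j = (\<Sum>k<n. u j k * v k)" for j
  define w where "w k = (\<Sum>j<n. c j * u j k)" for k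
  have vw: "(\<Sum>k<n. v k * w k) = (\<Sum>j<n. (c j)\<^sup>2)"
  proof -
    have "(\<Sum>k<n. v k * w k) = (\<Sum>j<n. c j * (\<Sum>k<n. u j k * v k))"
      unfolding w_def sum_distrib_left by (subst sum.swap) (simp add: ac_simps)
    then show ?thesis by (simp add: c_def power2_eq_square)
  qed
  have ww: "(\<Sum>k<n. (w k)\<^sup>2) = (\<Sum>j<n. (c j)\<^sup>2)"
    unfolding w_def by (rule sum_sq_orthonormal_comb[OF orth]) simp
  have "0 \<le> (\<Sum>k<n. (v k - w k)\<^sup>2)" by (rule sum_nonneg) simp
  also have "\<dots> = (\<Sum>k<n. (v k)\<^sup>2) - 2 * (\<Sum>k<n. v k * w k) + (\<Sum>k<n. (w k)\<^sup>2)"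
    by (simp add: power2_diff sum.distrib sum_subtractf sum_distrib_left mult.assoc)
  finally show ?thesis unfolding vw ww c_def by simp
qed

lemma mat_vec_red_resolvent:
  "mat_vec n (red_resolvent n lam u) v k
     = (\<Sum>j\<in>{1..<n}. (\<Sum>l<n. u j l * v l) / (lam j - lam 0) * u j k)"
proof -
  have "mat_vec n (red_resolvent n lam u) v k
      = (\<Sum>l<n. \<Sum>j\<in>{1..<n}. u j k / (lam j - lam 0) * (u j l * v l))"
    by (simp add: mat_vec_def red_resolvent_def sum_distrib_left divide_inverse ac_simps)
  also have "\<dots> = (\<Sum>j\<in>{1..<n}. \<Sum>l<n. u j k / (lam j - lam 0) * (u j l * v l))"
    by (rule sum.swap)
  finally show ?thesis by (simp add: sum_distrib_left sum_distrib_right divide_inverse ac_simps)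
qed

lemma inverse_gap_sq_le:
  fixes lam :: "nat \<Rightarrow> real"
  assumes desc: "\<forall>i j. i < j \<and> j < n \<longrightarrow> lam j < lam i" and j: "1 \<le> j" "j < n"
  shows "1 / (lam j - lam 0)\<^sup>2 \<le> 1 / (lam 1 - lam 0)\<^sup>2"
proof -
  have "lam 1 < lam 0" using desc[rule_format, of 0 1] j by auto
  moreover have "lam j \<le> lam 1" using desc[rule_format, of 1 j] j by (cases "j = 1") auto
  ultimately have "(lam 1 - lam 0)\<^sup>2 \<le> (lam j - lam 0)\<^sup>2" "0 < (lam 1 - lam 0)\<^sup>2"
    "0 < (lam j - lam 0)\<^sup>2"
    by (auto simp: abs_le_square_iff[symmetric])
  then show ?thesis by (intro divide_left_mono mult_pos_pos) auto
qed

lemma norm_sq_red_resolvent_le: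
  assumes n2: "n \<ge> 2" and orth: "orthonormal_rows n u"
    and desc: "\<forall>i j. i < j \<and> j < n \<longrightarrow> lam j < lam i"
  shows "(vec_norm n (mat_vec n (red_resolvent n lam u) v))\<^sup>2
     \<le> 1 / (lam 1 - lam 0)\<^sup>2 * ((\<Sum>k<n. (v k)\<^sup>2) - (\<Sum>k<n. u 0 k * v k)\<^sup>2)"
proof -
  define c where "c j = (\<Sum>l<n. u j l * v l)" for j
  define K where "K = 1 / (lam 1 - lam 0)\<^sup>2"
  have "(vec_norm n (mat_vec n (red_resolvent n lam u) v))\<^sup>2
        = (\<Sum>k<n. (mat_vec n (red_resolvent n lam u) v k)\<^sup>2)"
    unfolding vec_norm_def by (simp add: sum_nonneg)
  also have "\<dots> = (\<Sum>j\<in>{1..<n}. (c j / (lam j - lam 0))\<^sup>2)"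
    unfolding mat_vec_red_resolvent c_def by (rule sum_sq_orthonormal_comb[OF orth]) auto
  also have "\<dots> \<le> (\<Sum>j\<in>{1..<n}. K * (c j)\<^sup>2)"
  proof (rule sum_mono)
    fix j assume "j \<in> {1..<n}"
    then have gap: "1 / (lam j - lam 0)\<^sup>2 \<le> K"
      unfolding K_def by (intro inverse_gap_sq_le[OF desc]) auto
    show "(c j / (lam j - lam 0))\<^sup>2 \<le> K * (c j)\<^sup>2"
      using mult_right_mono[OF gap, of "(c j)\<^sup>2"] by (simp add: power_divide)
  qed
  also have "\<dots> = K * ((\<Sum>j<n. (c j)\<^sup>2) - (c 0)\<^sup>2)"
  proof -
    have "{..<n} = insert 0 {1..<n}" using n2 by auto
    then show ?thesis by (simp add: sum_distrib_left)
  qed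
  also have "\<dots> \<le> K * ((\<Sum>k<n. (v k)\<^sup>2) - (c 0)\<^sup>2)"
    using bessel_inequality[OF orth, of v] unfolding c_def K_def by (intro mult_left_mono) auto
  finally show ?thesis unfolding K_def c_def .
qed

definition upper_pairs :: "nat \<Rightarrow> (nat \<times> nat) set" where
  "upper_pairs n = {(i, j). i \<le> j \<and> j < n}"

definition upair :: "nat \<Rightarrow> nat \<Rightarrow> nat \<times> nat" where
  "upair i k = (min i k, max i k)"

definition coin_noise :: "real \<Rightarrow> ('a \<Rightarrow> bool) \<Rightarrow> 'a \<Rightarrow> real" where
  "coin_noise p b a = (if b a then 1 / p else 0) - 1"

lemma finite_set_pmf_Pi_pmf_bool:
  assumes "finite A"
  shows "finite (set_pmf (Pi_pmf A dflt (q :: 'a \<Rightarrow> bool pmf)))"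
proof (rule finite_subset)
  show "set_pmf (Pi_pmf A dflt q) \<subseteq> PiE_dflt A dflt (set_pmf \<circ> q)"
    by (rule set_Pi_pmf_subset'[OF assms])
  show "finite (PiE_dflt A dflt (set_pmf \<circ> q))"
    by (rule finite_PiE_dflt[OF assms]) (rule finite_subset[of _ UNIV], auto)
qed

lemma expectation_Pi_bernoulli_indicator_mult:
  assumes A: "finite A" and p: "0 \<le> p" "p \<le> 1" and a: "a \<in> A" and c: "c \<in> A"
  shows "measure_pmf.expectation (Pi_pmf A False (\<lambda>_. bernoulli_pmf p))
           (\<lambda>b. of_bool (b a) * of_bool (b c)) = (if a = c then p else p * p)"
proof -
  let ?h = "\<lambda>x (v::bool). if x \<in> {a, c} then (of_bool v :: real) else 1"
  have ac: "A \<inter> {a, c} = {a, c}" using a c by auto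
  have "of_bool (b a) * of_bool (b c) = (\<Prod>x\<in>A. ?h x (b x))" for b
  proof -
    have "(\<Prod>x\<in>A. ?h x (b x)) = (\<Prod>x\<in>{a, c}. (of_bool (b x) :: real))"
      using prod.inter_restrict[OF A, where g = "\<lambda>x. of_bool (b x) :: real" and B = "{a, c}"] ac
      by simp
    then show ?thesis by (cases "a = c") auto
  qed
  then have "measure_pmf.expectation (Pi_pmf A False (\<lambda>_. bernoulli_pmf p))
           (\<lambda>b. of_bool (b a) * of_bool (b c))
        = (\<Prod>x\<in>A. measure_pmf.expectation (bernoulli_pmf p) (?h x))"
    by (simp only:) (rule expectation_prod_Pi_pmf[OF A]; auto intro: integrable_measure_pmf_finite)
  also have "\<dots> = (\<Prod>x\<in>A. if x \<in> {a, c} then p else 1)"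
    using p by (intro prod.cong) auto
  also have "\<dots> = (\<Prod>x\<in>{a, c}. p)"
    using prod.inter_restrict[OF A, where g = "\<lambda>_. p" and B = "{a, c}"] ac by simp
  finally show ?thesis by (cases "a = c") auto
qed

lemma expectation_Pi_bernoulli_noise_mult:
  assumes A: "finite A" and p: "0 < p" "p \<le> 1" and a: "a \<in> A" and c: "c \<in> A"
  shows "measure_pmf.expectation (Pi_pmf A False (\<lambda>_. bernoulli_pmf p))
           (\<lambda>b. coin_noise p b a * coin_noise p b c) = (if a = c then (1 - p) / p else 0)"
proof -
  let ?E = "measure_pmf.expectation (Pi_pmf A False (\<lambda>_. bernoulli_pmf p))"
  let ?I = "\<lambda>x b. of_bool (b x) :: real"
  have "(\<lambda>b. coin_noise p b a * coin_noise p b c)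
      = (\<lambda>b. 1 / (p * p) * (?I a b * ?I c b) - 1 / p * (?I a b * ?I a b)
             - 1 / p * (?I c b * ?I c b) + 1)"
    by (auto simp: coin_noise_def fun_eq_iff field_simps)
  then have "?E (\<lambda>b. coin_noise p b a * coin_noise p b c)
      = 1 / (p * p) * ?E (\<lambda>b. ?I a b * ?I c b) - 1 / p * ?E (\<lambda>b. ?I a b * ?I a b)
        - 1 / p * ?E (\<lambda>b. ?I c b * ?I c b) + 1"
    by (simp add: integrable_measure_pmf_finite finite_set_pmf_Pi_pmf_bool A)
  also have "\<dots> = (if a = c then (1 - p) / p else 0)"
    using p by (simp add: expectation_Pi_bernoulli_indicator_mult A a c field_simps)
  finally show ?thesis .
qed

lemma finite_upper_pairs: "finite (upper_pairs n)"
  by (rule finite_subset[of _ "{..<n} \<times> {..<n}"]) (auto simp: upper_pairs_def)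

lemma coin_pmf_upper_pairs: "coin_pmf n p = Pi_pmf (upper_pairs n) False (\<lambda>_. bernoulli_pmf p)"
  by (simp add: coin_pmf_def upper_pairs_def)

lemma integrable_coin_pmf: "integrable (measure_pmf (coin_pmf n p)) (f :: _ \<Rightarrow> real)"
  by (rule integrable_measure_pmf_finite)
     (simp add: coin_pmf_upper_pairs finite_set_pmf_Pi_pmf_bool finite_upper_pairs)

lemma upair_in_upper_pairs: "i < n \<Longrightarrow> k < n \<Longrightarrow> upair i k \<in> upper_pairs n"
  by (auto simp: upair_def upper_pairs_def)

lemma upair_eq_iff: "upair i k = upair i' k' \<longleftrightarrow> (i' = i \<and> k' = k) \<or> (i' = k \<and> k' = i)"
  by (auto simp: upair_def min_def max_def split: if_splits)

lemma Emat_eq_coin_noise: "Emat M p b i k = M i k * coin_noise p b (upair i k)"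
  by (simp add: Emat_def Qmat_def coin_noise_def upair_def algebra_simps)

lemma mat_vec_Emat: "mat_vec n (Emat M p b) x i = (\<Sum>k<n. M i k * x k * coin_noise p b (upair i k))"
  by (simp add: mat_vec_def Emat_eq_coin_noise ac_simps)

lemma sum_sum_upair_eq:
  fixes h :: "nat \<Rightarrow> nat \<Rightarrow> real"
  assumes "i < n" "k < n"
  shows "(\<Sum>i'<n. \<Sum>k'<n. if upair i k = upair i' k' then h i' k' else 0)
       = (if i = k then h i i else h i k + h k i)"
proof -
  have "(\<Sum>i'<n. \<Sum>k'<n. if upair i k = upair i' k' then h i' k' else 0)
      = (\<Sum>i'<n. \<Sum>k'<n. (if k' = k then (if i' = i then h i' k' else 0) else 0)
          + (if k' = i then (if i' = k \<and> i \<noteq> k then h i' k' else 0) else 0))"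
    by (intro sum.cong refl) (auto simp: upair_eq_iff)
  also have "\<dots> = (if i = k then h i i else h i k + h k i)"
    using assms by (simp add: sum.distrib)
  finally show ?thesis .
qed

lemma expectation_norm_sq_Emat_mat_vec:
  assumes p: "0 < p" "p \<le> 1"
  shows "measure_pmf.expectation (coin_pmf n p) (\<lambda>b. \<Sum>i<n. (mat_vec n (Emat M p b) x i)\<^sup>2)
    = (1 - p) / p * (\<Sum>k<n. (x k)\<^sup>2 * (\<Sum>i<n. (M i k)\<^sup>2))"
proof -
  have "(\<lambda>b. \<Sum>i<n. (mat_vec n (Emat M p b) x i)\<^sup>2) = (\<lambda>b. \<Sum>i<n. \<Sum>k<n. \<Sum>k'<n.
     (M i k * x k * (M i k' * x k')) * (coin_noise p b (upair i k) * coin_noise p b (upair i k')))"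
    by (simp add: mat_vec_Emat power2_eq_square sum_product ac_simps)
  then have "measure_pmf.expectation (coin_pmf n p) (\<lambda>b. \<Sum>i<n. (mat_vec n (Emat M p b) x i)\<^sup>2)
     = (\<Sum>i<n. \<Sum>k<n. \<Sum>k'<n. (M i k * x k * (M i k' * x k')) * measure_pmf.expectation
          (coin_pmf n p) (\<lambda>b. coin_noise p b (upair i k) * coin_noise p b (upair i k')))"
    by (simp only: Bochner_Integration.integral_sum[OF integrable_coin_pmf]
          integral_mult_right_zero)
  also have "\<dots> = (\<Sum>i<n. \<Sum>k<n. \<Sum>k'<n. (M i k * x k * (M i k' * x k')) *
          (if k' = k then (1 - p) / p else 0))"
    by (intro sum.cong refl, simp only: expectation_Pi_bernoulli_noise_mult[OF finite_upper_pairs p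
          upair_in_upper_pairs upair_in_upper_pairs, folded coin_pmf_upper_pairs] lessThan_iff)
       (auto simp: upair_eq_iff)
  also have "\<dots> = (\<Sum>i<n. \<Sum>k<n. (1 - p) / p * ((x k)\<^sup>2 * (M i k)\<^sup>2))"
    by (simp add: power2_eq_square ac_simps if_distrib[of "\<lambda>y. _ * y"] cong: if_cong)
  also have "\<dots> = (1 - p) / p * (\<Sum>k<n. (x k)\<^sup>2 * (\<Sum>i<n. (M i k)\<^sup>2))"
    by (subst sum.swap) (simp only: sum_distrib_left)
  finally show ?thesis .
qed

text \<open>The symmetry of \<open>M\<close> makes the two ordered pairs \<open>(i, k)\<close>, \<open>(k, i)\<close> of each
off-diagonal coin contribute equally, whence the factor \<open>2\<close> and the diagonal correction.\<close>

lemma expectation_quad_form_Emat_sq: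
  assumes p: "0 < p" "p \<le> 1" and symm: "\<forall>i<n. \<forall>j<n. M i j = M j i"
  shows "measure_pmf.expectation (coin_pmf n p) (\<lambda>b. (\<Sum>i<n. x i * mat_vec n (Emat M p b) x i)\<^sup>2)
    = (1 - p) / p * (2 * (\<Sum>k<n. \<Sum>l<n. (x k)\<^sup>2 * (M k l * M k l) * (x l)\<^sup>2)
               - (\<Sum>k<n. ((x k)\<^sup>2)\<^sup>2 * (M k k * M k k)))"
proof -
  define h where "h i k = x i * M i k * x k" for i k
  have h_sym: "i < n \<Longrightarrow> k < n \<Longrightarrow> h k i = h i k" for i k
    using symm by (simp add: h_def)
  let ?f = "\<lambda>b i k. h i k * coin_noise p b (upair i k)"
  have "(\<Sum>i<n. x i * mat_vec n (Emat M p b) x i)\<^sup>2 = (\<Sum>i<n. \<Sum>k<n. \<Sum>i'<n. \<Sum>k'<n.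
      (h i k * h i' k') * (coin_noise p b (upair i k) * coin_noise p b (upair i' k')))" for b
  proof -
    have "(\<Sum>i<n. x i * mat_vec n (Emat M p b) x i)\<^sup>2 = (\<Sum>i<n. \<Sum>k<n. ?f b i k)\<^sup>2"
      by (simp add: mat_vec_Emat h_def sum_distrib_left ac_simps)
    also have "\<dots> = (\<Sum>i<n. \<Sum>k<n. ?f b i k * (\<Sum>i'<n. \<Sum>k'<n. ?f b i' k'))"
      by (simp only: power2_eq_square sum_distrib_right)
    also have "\<dots> = (\<Sum>i<n. \<Sum>k<n. \<Sum>i'<n. \<Sum>k'<n. ?f b i k * ?f b i' k')"
      by (simp only: sum_distrib_left)
    finally show ?thesis by (simp add: ac_simps)
  qed
  then have "measure_pmf.expectation (coin_pmf n p) (\<lambda>b. (\<Sum>i<n. x i * mat_vec n (Emat M p b) x i)\<^sup>2)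
     = (\<Sum>i<n. \<Sum>k<n. \<Sum>i'<n. \<Sum>k'<n. (h i k * h i' k') * measure_pmf.expectation (coin_pmf n p)
          (\<lambda>b. coin_noise p b (upair i k) * coin_noise p b (upair i' k')))"
    by (simp only: Bochner_Integration.integral_sum[OF integrable_coin_pmf]
          integral_mult_right_zero)
  also have "\<dots> = (\<Sum>i<n. \<Sum>k<n. \<Sum>i'<n. \<Sum>k'<n. (h i k * h i' k') *
          (if upair i k = upair i' k' then (1 - p) / p else 0))"
    by (intro sum.cong refl, simp only: expectation_Pi_bernoulli_noise_mult[OF finite_upper_pairs p
          upair_in_upper_pairs upair_in_upper_pairs, folded coin_pmf_upper_pairs] lessThan_iff)
  also have "\<dots> = (\<Sum>i<n. \<Sum>k<n. (1 - p) / p * (h i k *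
          (\<Sum>i'<n. \<Sum>k'<n. if upair i k = upair i' k' then h i' k' else 0)))"
    by (simp add: sum_distrib_left if_distrib[of "\<lambda>y. _ * y"] ac_simps cong: if_cong)
  also have "\<dots> = (\<Sum>i<n. \<Sum>k<n. (1 - p) / p * (2 * (h i k)\<^sup>2 - (if k = i then (h i i)\<^sup>2 else 0)))"
    by (intro sum.cong refl, simp only: sum_sum_upair_eq lessThan_iff)
       (auto simp: h_sym power2_eq_square)
  also have "\<dots> = (1 - p) / p * (2 * (\<Sum>i<n. \<Sum>k<n. (h i k)\<^sup>2) - (\<Sum>i<n. (h i i)\<^sup>2))"
  proof -
    have "(\<Sum>i<n. \<Sum>k<n. if k = i then (h i i)\<^sup>2 else 0) = (\<Sum>i<n. (h i i)\<^sup>2)" by simp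
    then show ?thesis by (simp only: sum_distrib_left[symmetric] sum_subtractf)
  qed
  also have "\<dots> = (1 - p) / p * (2 * (\<Sum>k<n. \<Sum>l<n. (x k)\<^sup>2 * (M k l * M k l) * (x l)\<^sup>2)
               - (\<Sum>k<n. ((x k)\<^sup>2)\<^sup>2 * (M k k * M k k)))"
    by (simp add: h_def power2_eq_square ac_simps)
  finally show ?thesis .
qed

lemma expectation_norm_sq_red_resolvent_Emat_le:
  assumes n2: "n \<ge> 2" and symm: "\<forall>i<n. \<forall>j<n. M i j = M j i" and orth: "orthonormal_rows n u"
    and desc: "\<forall>i j. i < j \<and> j < n \<longrightarrow> lam j < lam i" and p: "0 < p" "p \<le> 1"
  shows "measure_pmf.expectation (coin_pmf n p)
           (\<lambda>b. (vec_norm n (mat_vec n (red_resolvent n lam u) (mat_vec n (Emat M p b) (u 0))))\<^sup>2)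
         \<le> 1 / (lam 1 - lam 0)\<^sup>2 * ((1 - p) / p) *
           ((\<Sum>k<n. (u 0 k)\<^sup>2 * (\<Sum>i<n. (M i k)\<^sup>2))
            - (2 * (\<Sum>k<n. \<Sum>l<n. (u 0 k)\<^sup>2 * (M k l * M k l) * (u 0 l)\<^sup>2)
               - (\<Sum>k<n. ((u 0 k)\<^sup>2)\<^sup>2 * (M k k * M k k))))"
proof -
  let ?E = "measure_pmf.expectation (coin_pmf n p)"
  let ?v = "\<lambda>b. mat_vec n (Emat M p b) (u 0)"
  have "?E (\<lambda>b. (vec_norm n (mat_vec n (red_resolvent n lam u) (?v b)))\<^sup>2)
     \<le> ?E (\<lambda>b. 1 / (lam 1 - lam 0)\<^sup>2 * ((\<Sum>k<n. (?v b k)\<^sup>2) - (\<Sum>k<n. u 0 k * ?v b k)\<^sup>2))"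
    by (rule integral_mono[OF integrable_coin_pmf integrable_coin_pmf])
       (rule norm_sq_red_resolvent_le[OF n2 orth desc])
  also have "\<dots> = 1 / (lam 1 - lam 0)\<^sup>2 * (?E (\<lambda>b. \<Sum>k<n. (?v b k)\<^sup>2)
                                           - ?E (\<lambda>b. (\<Sum>k<n. u 0 k * ?v b k)\<^sup>2))"
    by (simp add: integrable_coin_pmf)
  finally show ?thesis
    by (simp only: expectation_norm_sq_Emat_mat_vec[OF p]
          expectation_quad_form_Emat_sq[OF p symm] right_diff_distrib mult.assoc)
qed

lemma vec_norm_mat_vec_bdd_above:
  "bdd_above {vec_norm n (mat_vec n M x) | x. vec_norm n x = 1}"
proof (rule bdd_aboveI[where M = "\<Sum>i<n. \<Sum>j<n. \<bar>M i j\<bar>"], clarify)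
  fix x assume x: "vec_norm n x = 1"
  have xj: "\<bar>x j\<bar> \<le> 1" if "j < n" for j
  proof -
    have "(x j)\<^sup>2 \<le> (\<Sum>i<n. (x i)\<^sup>2)"
      by (rule member_le_sum[where f = "\<lambda>i. (x i)\<^sup>2"]) (use that in auto)
    then show ?thesis using x by (simp add: vec_norm_def abs_square_le_1)
  qed
  have "vec_norm n (mat_vec n M x) \<le> (\<Sum>i<n. \<bar>mat_vec n M x i\<bar>)"
    unfolding vec_norm_def L2_set_def[symmetric] by (rule L2_set_le_sum_abs)
  also have "\<dots> \<le> (\<Sum>i<n. \<Sum>j<n. \<bar>M i j\<bar> * \<bar>x j\<bar>)"
    unfolding mat_vec_def by (intro sum_mono) (simp add: sum_abs[THEN order_trans] abs_mult)
  also have "\<dots> \<le> (\<Sum>i<n. \<Sum>j<n. \<bar>M i j\<bar>)"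
    using xj by (intro sum_mono) (simp add: mult_left_le)
  finally show "vec_norm n (mat_vec n M x) \<le> (\<Sum>i<n. \<Sum>j<n. \<bar>M i j\<bar>)" .
qed

lemma abs_eigenvalue_le_spec_norm:
  assumes orth: "orthonormal_rows n u"
    and spectral: "\<forall>k<n. \<forall>l<n. M k l = (\<Sum>i<n. lam i * u i k * u i l)"
    and m: "m < n"
  shows "\<bar>lam m\<bar> \<le> spec_norm n M"
proof -
  have unit: "(\<Sum>k<n. (u m k)\<^sup>2) = 1"
    using orth m by (simp add: orthonormal_rows_def power2_eq_square)
  have eigen: "mat_vec n M (u m) k = lam m * u m k" if k: "k < n" for k
  proof -
    have "mat_vec n M (u m) k = (\<Sum>i<n. lam i * u i k * (\<Sum>l<n. u i l * u m l))"
      unfolding mat_vec_def using spectral k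
      by (simp add: sum_distrib_left sum_distrib_right mult.assoc) (rule sum.swap)
    also have "\<dots> = lam m * u m k"
      using orth m by (simp add: orthonormal_rows_def if_distrib[of "\<lambda>y. _ * y"] cong: if_cong)
    finally show ?thesis .
  qed
  have "\<bar>lam m\<bar> = vec_norm n (mat_vec n M (u m))"
    using unit by (simp add: vec_norm_def eigen power_mult_distrib sum_distrib_left[symmetric])
  also have "\<dots> \<le> spec_norm n M"
    unfolding spec_norm_def using unit
    by (intro cSup_upper vec_norm_mat_vec_bdd_above) (auto simp: vec_norm_def)
  finally show ?thesis .
qed

lemma abs_le_inf_norm: "k < n \<Longrightarrow> \<bar>x k\<bar> \<le> inf_norm n x"
  unfolding inf_norm_def by (rule Max_ge) auto

lemma quartic_bracket_nonneg:
  fixes x :: "nat \<Rightarrow> real" and M :: "nat \<Rightarrow> nat \<Rightarrow> real"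
  shows "0 \<le> 2 * (\<Sum>k<n. \<Sum>l<n. (x k)\<^sup>2 * (M k l * M k l) * (x l)\<^sup>2)
          - (\<Sum>k<n. ((x k)\<^sup>2)\<^sup>2 * (M k k * M k k))"
proof -
  have "(\<Sum>k<n. ((x k)\<^sup>2)\<^sup>2 * (M k k * M k k))
        \<le> (\<Sum>k<n. \<Sum>l<n. (x k)\<^sup>2 * (M k l * M k l) * (x l)\<^sup>2)"
  proof (rule sum_mono)
    fix k assume "k \<in> {..<n}"
    then have "(x k)\<^sup>2 * (M k k * M k k) * (x k)\<^sup>2
               \<le> (\<Sum>l<n. (x k)\<^sup>2 * (M k l * M k l) * (x l)\<^sup>2)"
      by (intro member_le_sum) auto
    then show "((x k)\<^sup>2)\<^sup>2 * (M k k * M k k) \<le> (\<Sum>l<n. (x k)\<^sup>2 * (M k l * M k l) * (x l)\<^sup>2)"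
      by (simp add: power2_eq_square ac_simps)
  qed
  moreover have "0 \<le> (\<Sum>k<n. ((x k)\<^sup>2)\<^sup>2 * (M k k * M k k))"
    by (intro sum_nonneg) simp
  ultimately show ?thesis by linarith
qed

lemma weighted_column_norms_le:
  "(\<Sum>k<n. (x k)\<^sup>2 * (\<Sum>i<n. (M i k)\<^sup>2)) \<le> (inf_norm n x)\<^sup>2 * frob_sq n M"
proof -
  have "(\<Sum>k<n. (x k)\<^sup>2 * (\<Sum>i<n. (M i k)\<^sup>2)) \<le> (\<Sum>k<n. (inf_norm n x)\<^sup>2 * (\<Sum>i<n. (M i k)\<^sup>2))"
  proof (rule sum_mono)
    fix k assume "k \<in> {..<n}"
    then have "(x k)\<^sup>2 \<le> (inf_norm n x)\<^sup>2"
      using abs_le_inf_norm[of k n x] by (simp add: abs_le_square_iff[symmetric])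
    then show "(x k)\<^sup>2 * (\<Sum>i<n. (M i k)\<^sup>2) \<le> (inf_norm n x)\<^sup>2 * (\<Sum>i<n. (M i k)\<^sup>2)"
      by (intro mult_right_mono sum_nonneg) auto
  qed
  also have "\<dots> = (inf_norm n x)\<^sup>2 * frob_sq n M"
    unfolding frob_sq_def sum_distrib_left[symmetric] by (subst sum.swap) simp
  finally show ?thesis .
qed

lemma variance_bound_le_num_rank_bound:
  fixes x :: "nat \<Rightarrow> real" and M :: "nat \<Rightarrow> nat \<Rightarrow> real" and l0 l1 p :: real
  assumes gap: "l1 < l0" "\<bar>l1\<bar> \<le> l0" and top: "l0 = spec_norm n M" and p: "0 < p" "p \<le> 1"
  shows "1 / (l1 - l0)\<^sup>2 * ((1 - p) / p) *
           ((\<Sum>k<n. (x k)\<^sup>2 * (\<Sum>i<n. (M i k)\<^sup>2))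
            - (2 * (\<Sum>k<n. \<Sum>l<n. (x k)\<^sup>2 * (M k l * M k l) * (x l)\<^sup>2)
               - (\<Sum>k<n. ((x k)\<^sup>2)\<^sup>2 * (M k k * M k k))))
         \<le> 1 / (1 - l1 / l0)\<^sup>2 * (inf_norm n x)\<^sup>2 * (num_rank n M / p)"
    (is "?K * ?\<sigma> * (?S - ?B) \<le> _")
proof -
  have "?K * ?\<sigma> * (?S - ?B) \<le> ?K * ?\<sigma> * ?S"
    using quartic_bracket_nonneg[where x = x and n = n and M = M] p by (intro mult_left_mono) auto
  also have "\<dots> \<le> ?K * (1 / p) * ((inf_norm n x)\<^sup>2 * frob_sq n M)"
    using p weighted_column_norms_le[where x = x and n = n and M = M]
    by (intro mult_mono mult_left_mono divide_right_mono) (auto simp: sum_nonneg frob_sq_def)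
  also have "\<dots> = 1 / (1 - l1 / l0)\<^sup>2 * (inf_norm n x)\<^sup>2 * (num_rank n M / p)"
    using gap by (simp add: num_rank_def top[symmetric] field_simps power2_eq_square)
  finally show ?thesis .
qed

theorem theorem4:
  fixes n :: nat and M :: "nat \<Rightarrow> nat \<Rightarrow> real" and lam :: "nat \<Rightarrow> real"
    and u :: "nat \<Rightarrow> nat \<Rightarrow> real" and p :: real
  assumes n2: "n \<ge> 2"
    and symm: "\<forall>i<n. \<forall>j<n. M i j = M j i"
    and orthonormal: "\<forall>i<n. \<forall>j<n. (\<Sum>k<n. u i k * u j k) = (if i = j then 1 else 0)"
    and spectral: "\<forall>k<n. \<forall>l<n. M k l = (\<Sum>i<n. lam i * u i k * u i l)"
    and distinct_desc: "\<forall>i j. i < j \<and> j < n \<longrightarrow> lam j < lam i"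
    and p: "0 < p" "p < 1"
  shows "measure_pmf.expectation (coin_pmf n p)
           (\<lambda>b. (vec_norm n (mat_vec n (red_resolvent n lam u)
                    (mat_vec n (Emat M p b) (u 0))))\<^sup>2)
         \<le> 1 / (lam 1 - lam 0)\<^sup>2 * ((1 - p) / p) *
           ((\<Sum>k<n. (u 0 k)\<^sup>2 * (vec_norm n (\<lambda>i. M i k))\<^sup>2)
            - (2 * (\<Sum>k<n. \<Sum>l<n. (u 0 k)\<^sup>2 * (M k l * M k l) * (u 0 l)\<^sup>2)
               - (\<Sum>k<n. ((u 0 k)\<^sup>2)\<^sup>2 * (M k k * M k k))))
       \<and> (lam 0 = spec_norm n M \<longrightarrow>
          measure_pmf.expectation (coin_pmf n p)
           (\<lambda>b. (vec_norm n (mat_vec n (red_resolvent n lam u)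
                    (mat_vec n (Emat M p b) (u 0))))\<^sup>2)
          \<le> 1 / (1 - lam 1 / lam 0)\<^sup>2 * (inf_norm n (u 0))\<^sup>2 * (num_rank n M / p))"
proof -
  have orth: "orthonormal_rows n u" using orthonormal by (simp add: orthonormal_rows_def)
  have gap: "lam 1 < lam 0" using distinct_desc n2 by auto
  have top_ge: "\<bar>lam 1\<bar> \<le> lam 0" if "lam 0 = spec_norm n M"
    using abs_eigenvalue_le_spec_norm[OF orth spectral, of 1] n2 that by simp
  have column_norm_sq: "(vec_norm n (\<lambda>i. M i k))\<^sup>2 = (\<Sum>i<n. (M i k)\<^sup>2)" for k
    by (simp add: vec_norm_def sum_nonneg)
  have p': "0 < p" "p \<le> 1" using p by auto
  note bound = expectation_norm_sq_red_resolvent_Emat_le[OF n2 symm orth distinct_desc p']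
  show ?thesis
    unfolding column_norm_sq
    using bound order_trans[OF bound variance_bound_le_num_rank_bound[OF gap top_ge _ p']]
    by blast
qed

end
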